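(* Assume the generic setting with Conditions (C1) and (C2), where $(\alpha_t)$ satisfies the step-size condition (A). Define: - $L_t:=f(x_t)-f(x^\star)-\alpha_tB$; - $T_0$ as in the context; - $Z:=Y+\kappa/2$, $D:=\mathbb E[e^{\lambda Z}]$, $E:=\mathbb E[(e^{\lambda Z}-1-\lambda Z)/\lambda^2]$; - $Q:=\min\{\lambda,\kappa/(2E)\}$; - $G\in(0,1]$ a constant with $\alpha_t\ge\sqrt G\,\alpha_{\lfloor t/2\rfloor}$ for all $t\ge1$; - for $n\in\mathbb N$, $H_n:=D\,e^{\kappa QG^n/2}/(1-e^{-\kappa QG^n/2})$. Then for all $n\in\mathbb N$ and $t$ with $\lfloor t/2^n\rfloor\ge\max\{T_0,1\}$, and all $z\ge0$, $$\mathbb P(L_{t+1}\ge z)\le \exp\Big(-\frac{QG^n}{\alpha_t}\Big(z-F-\alpha_0B+\frac{\kappa}{2}\sum_{s=\lfloor t/2^n\rfloor}^{t}\alpha_s\Big)\Big)+H_n\exp\Big(-\frac{QG^n}{\alpha_t}z\Big).$$ If moreover $\frac{\kappa}{2}\sum_{s=\lfloor t/2^n\rfloor}^{t}\alpha_s\ge F+\alpha_0B$, then $$\mathbb E[L_{t+1}]\le\frac{1+H_n}{QG^n}\,\alpha_t.$$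
   Context: Generic setting. $\mathcal X\subseteq\mathbb R^d$ is a nonempty closed bounded convex set, $f:\mathcal X\to\mathbb R$ is continuous, $x^\star$ is a minimizer of $f$ on $\mathcal X$, and $F:=\max_{\mathcal X}f-\min_{\mathcal X}f$. On a probability space with filtration $(\mathcal F_t)_{t\ge0}$, $(x_t)_{t\ge0}$ is an $\mathcal X$-valued adapted process, and $(\alpha_t)_{t\ge0}$ is a deterministic sequence of positive step sizes. (C1): there exist $\kappa>0$ and $B>0$ such that for every $t\ge0$, almost surely on $\{f(x_t)-f(x^\star)\ge\alpha_tB\}$, $\mathbb E[f(x_{t+1})-f(x_t)\mid\mathcal F_t]\le-2\alpha_t\kappa$. (C2): there exist $\lambda>0$ and a nonnegative random variable $Y$ with $\mathbb E[e^{\lambda Y}]<\infty$ such that for every $t\ge0$ and $y\ge0$, almost surely $\mathbb P(|f(x_{t+1})-f(x_t)|\ge\alpha_t y\mid\mathcal F_t)\le\mathbb P(Y\ge y)$. Step-size condition (A): $(\alpha_t)$ is positive and nonincreasing, $\sum_t\alpha_t=\infty$, $\liminf_{t\to\infty}\alpha_{2t}/\alpha_t>0$, and $\lim_{t\to\infty}(\alpha_t-\alpha_{t+1})/\alpha_t=0$. $T_0:=\min\{t\ge0:\ (\alpha_s-\alpha_{s+1})/\alpha_s<\kappa/(2B)\ \forall s\ge t\}$. *)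

theory Defs
  imports "HOL-Probability.Probability"
begin

definition T0 :: "(nat \<Rightarrow> real) \<Rightarrow> real \<Rightarrow> real \<Rightarrow> nat" where
  "T0 \<alpha> \<kappa> B = (LEAST t. \<forall>s\<ge>t. (\<alpha> s - \<alpha> (Suc s)) / \<alpha> s < \<kappa> / (2 * B))"

definition stepsize_A :: "(nat \<Rightarrow> real) \<Rightarrow> bool" where
  "stepsize_A \<alpha> \<longleftrightarrow>
     (\<forall>t. \<alpha> t > 0) \<and> decseq \<alpha> \<and>
     filterlim (\<lambda>n. \<Sum>t<n. \<alpha> t) at_top sequentially \<and>
     liminf (\<lambda>t. ereal (\<alpha> (2 * t) / \<alpha> t)) > 0 \<and>
     (\<lambda>t. (\<alpha> t - \<alpha> (Suc t)) / \<alpha> t) \<longlonglongrightarrow> 0"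

definition Dconst :: "'b measure \<Rightarrow> ('b \<Rightarrow> real) \<Rightarrow> real \<Rightarrow> real \<Rightarrow> real" where
  "Dconst N Y lam \<kappa> = integral\<^sup>L N (\<lambda>\<omega>. exp (lam * (Y \<omega> + \<kappa> / 2)))"

definition Econst :: "'b measure \<Rightarrow> ('b \<Rightarrow> real) \<Rightarrow> real \<Rightarrow> real \<Rightarrow> real" where
  "Econst N Y lam \<kappa> = integral\<^sup>L N (\<lambda>\<omega>.
     (exp (lam * (Y \<omega> + \<kappa> / 2)) - 1 - lam * (Y \<omega> + \<kappa> / 2)) / lam\<^sup>2)"

definition Qconst :: "'b measure \<Rightarrow> ('b \<Rightarrow> real) \<Rightarrow> real \<Rightarrow> real \<Rightarrow> real" where
  "Qconst N Y lam \<kappa> = min lam (\<kappa> / (2 * Econst N Y lam \<kappa>))"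

definition Hconst :: "'b measure \<Rightarrow> ('b \<Rightarrow> real) \<Rightarrow> real \<Rightarrow> real \<Rightarrow> real \<Rightarrow> nat \<Rightarrow> real" where
  "Hconst N Y lam \<kappa> G n =
     Dconst N Y lam \<kappa> * exp (\<kappa> * Qconst N Y lam \<kappa> * G ^ n / 2)
       / (1 - exp (- (\<kappa> * Qconst N Y lam \<kappa> * G ^ n / 2)))"

end

theory Submission
  imports Defs
begin

text \<open>Write L_t = f(x_t) - f(x*) - alpha_t B and m_t = E exp(eta L_t). Split
  exp(eta L_(t+1)) = exp(eta L_t) exp(eta (L_(t+1) - L_t)) along the F_t-measurable event
  {L_t \<ge> 0}. On it, the drift condition (C1) and the second-order bound
  e^u \<le> 1 + u + s^2 psi(v) for |u| \<le> s v, where psi(v) = e^v - 1 - v, contract the exponential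
  moment by exp(-eta alpha_t kappa); off it, exp(eta L_t) \<le> 1 and the light tail (C2) bounds the
  moment generating function of the increment by D. Hence m_(t+1) \<le> exp(-eta kappa alpha_t) m_t + D
  whenever t \<ge> T_0 and eta alpha_t \<le> Q. For eta = Q G^n / alpha_t this holds from
  floor(t / 2^n) on, since halving the index shrinks the step size by at most sqrt G; iterating
  from m \<le> exp(eta F) bounds m_(t+1), and Chernoff's inequality and x \<le> e^(eta x) / eta give the
  two claims.\<close>

lemma exp_scale_le_chord:
  fixes s x :: real
  assumes "0 \<le> s" "s \<le> 1"
  shows "exp (s * x) \<le> s * exp x + (1 - s)"
  using convex_onD[OF exp_convex, of s 0 x] assms by (simp add: algebra_simps)

lemma exp_excess_mono:
  fixes a b :: real
  assumes "0 \<le> a" "a \<le> b"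
  shows "exp a - 1 - a \<le> exp b - 1 - b"
proof -
  have "((\<lambda>x. exp x - 1 - x) has_real_derivative (exp v - 1)) (at v)" for v
    by (auto intro!: derivative_eq_intros)
  then show ?thesis
    using deriv_nonneg_imp_mono[of a b "\<lambda>x. exp x - 1 - x" "\<lambda>v. exp v - 1"] assms by simp
qed

lemma exp_excess_le_abs:
  fixes u :: real
  shows "exp u - 1 - u \<le> exp \<bar>u\<bar> - 1 - \<bar>u\<bar>"
proof (cases "u \<ge> 0")
  case False
  define g where "g = (\<lambda>x::real. exp x - exp (-x) - 2 * x)"
  have d: "(g has_real_derivative (exp v + exp (-v) - 2)) (at v)" for v
    unfolding g_def by (auto intro!: derivative_eq_intros)
  have "exp v + exp (-v) - 2 \<ge> 0" for v :: real
    using add_mono[OF exp_ge_add_one_self[of v] exp_ge_add_one_self[of "-v"]] by simp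
  then have "g 0 \<le> g (-u)"
    using deriv_nonneg_imp_mono[of 0 "-u" g "\<lambda>v. exp v + exp (-v) - 2", OF d] False by simp
  then show ?thesis
    using False by (simp add: g_def)
qed simp

lemma exp_excess_scale_le:
  fixes s x :: real
  assumes s: "0 \<le> s" "s \<le> 1" and x: "0 \<le> x"
  shows "exp (s * x) - 1 - s * x \<le> s\<^sup>2 * (exp x - 1 - x)"
proof -
  define g where "g = (\<lambda>x. s\<^sup>2 * (exp x - 1 - x) - (exp (s * x) - 1 - s * x))"
  define g' where "g' = (\<lambda>x. s\<^sup>2 * (exp x - 1) - s * (exp (s * x) - 1))"
  have "(g has_real_derivative g' v) (at v)" for v
    unfolding g_def g'_def by (auto intro!: derivative_eq_intros simp: algebra_simps)
  moreover have "g' v \<ge> 0" for v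
  proof -
    have "exp (s * v) - 1 \<le> s * (exp v - 1)"
      using exp_scale_le_chord[OF s, of v] by (simp add: algebra_simps)
    then have "s * (exp (s * v) - 1) \<le> s * (s * (exp v - 1))"
      using s(1) by (rule mult_left_mono)
    then show ?thesis
      unfolding g'_def power2_eq_square by (simp add: mult.assoc)
  qed
  ultimately have "g 0 \<le> g x"
    using deriv_nonneg_imp_mono[of 0 x g g'] x by simp
  then show ?thesis
    unfolding g_def by simp
qed

lemma exp_excess_ge_half_square:
  fixes u :: real
  assumes "u \<ge> 0"
  shows "u\<^sup>2 / 2 \<le> exp u - 1 - u"
proof -
  have d: "((\<lambda>x. exp x - 1 - x - x\<^sup>2 / 2) has_real_derivative (exp v - 1 - v)) (at v)" for v
    by (auto intro!: derivative_eq_intros)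
  have "0 \<le> exp v - 1 - v" for v :: real
    using exp_ge_add_one_self[of v] by linarith
  then show ?thesis
    using deriv_nonneg_imp_mono[of 0 u _ "\<lambda>v. exp v - 1 - v", OF d] assms by simp
qed

lemma exp_le_second_order:
  fixes u s v :: real
  assumes u: "\<bar>u\<bar> \<le> s * v" and s: "0 \<le> s" "s \<le> 1" and v: "0 \<le> v"
  shows "exp u \<le> 1 + u + s\<^sup>2 * (exp v - 1 - v)"
proof -
  have "exp u - 1 - u \<le> exp \<bar>u\<bar> - 1 - \<bar>u\<bar>"
    by (rule exp_excess_le_abs)
  also have "\<dots> \<le> exp (s * v) - 1 - s * v"
    using u by (intro exp_excess_mono) auto
  also have "\<dots> \<le> s\<^sup>2 * (exp v - 1 - v)"
    using s v by (rule exp_excess_scale_le)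
  finally show ?thesis
    by simp
qed

lemma divide_one_minus_exp_le_half:
  fixes a D :: real
  assumes "a > 0" "D \<ge> 0"
  shows "D / (1 - exp (- a)) \<le> D * exp (a / 2) / (1 - exp (- (a / 2)))"
proof -
  define b where "b = exp (- (a / 2))"
  have b: "0 < b" "b < 1"
    unfolding b_def using assms by auto
  have "b * b < b"
    using b by simp
  then have bb: "b * b < 1"
    using b by linarith
  then have pos: "0 < (1 - b * b) * (1 - b)"
    using b by (intro mult_pos_pos) auto
  have "exp (- a) = b * b"
    unfolding b_def by (simp add: exp_add[symmetric])
  moreover have "D / (1 - b * b) \<le> D / (1 - b)"
    using b bb pos assms(2) by (intro divide_left_mono) auto
  moreover have "D / (1 - b) \<le> D * exp (a / 2) / (1 - b)"
    using b assms by (intro divide_right_mono) (auto simp: mult_le_cancel_left1)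
  ultimately show ?thesis
    unfolding b_def by simp
qed

lemma power_le_sqrt_power:
  fixes G :: real
  assumes "0 \<le> G" "G \<le> 1"
  shows "G ^ n \<le> sqrt G ^ n"
proof -
  have "G = sqrt G * sqrt G"
    using assms by simp
  also have "\<dots> \<le> sqrt G"
    using assms by (intro mult_left_le) auto
  finally show ?thesis
    using assms by (intro power_mono) auto
qed

lemma exp_linear_recursion_le:
  fixes m a :: "nat \<Rightarrow> real" and c q D :: real
  assumes step: "\<And>s. s0 \<le> s \<Longrightarrow> s < s0 + k \<Longrightarrow> m (Suc s) \<le> exp (- (c * a s)) * m s + D"
    and rate: "\<And>s. s0 \<le> s \<Longrightarrow> s < s0 + k \<Longrightarrow> exp (- (c * a s)) \<le> q"
    and q: "q < 1" and D: "D \<ge> 0"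
  shows "m (s0 + k) \<le> exp (- (c * (\<Sum>j\<in>{s0..<s0 + k}. a j))) * m s0 + D / (1 - q)"
  using step rate
proof (induction k)
  case 0
  then show ?case
    using q D by simp
next
  case (Suc k)
  define s where "s = s0 + k"
  define S where "S = (\<Sum>j\<in>{s0..<s}. a j)"
  have IH: "m s \<le> exp (- (c * S)) * m s0 + D / (1 - q)"
    using Suc by (simp add: s_def S_def)
  have "m (Suc s) \<le> exp (- (c * a s)) * m s + D"
    using Suc.prems(1) by (simp add: s_def)
  also have "\<dots> \<le> exp (- (c * a s)) * (exp (- (c * S)) * m s0 + D / (1 - q)) + D"
    using IH by (simp add: mult_left_mono)
  also have "\<dots> = exp (- (c * (S + a s))) * m s0 + exp (- (c * a s)) * (D / (1 - q)) + D"
    by (simp only: distrib_left mult.assoc[symmetric] mult_exp_exp) (simp add: algebra_simps)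
  also have "\<dots> \<le> exp (- (c * (S + a s))) * m s0 + q * (D / (1 - q)) + D"
    using Suc.prems(2)[of s] q D by (intro add_mono order_refl mult_right_mono) (auto simp: s_def)
  also have "\<dots> = exp (- (c * (S + a s))) * m s0 + D / (1 - q)"
    using q by (simp add: field_simps)
  finally show ?case
    by (simp add: s_def S_def add.commute)
qed

lemma nn_integral_weighted_Icc_swap:
  fixes K :: "'a measure" and W V :: "'a \<Rightarrow> real" and g :: "real \<Rightarrow> real"
  assumes "sigma_finite_measure K"
    and [measurable]: "W \<in> borel_measurable K" "V \<in> borel_measurable K" "g \<in> borel_measurable borel"
  shows "(\<integral>\<^sup>+\<omega>. ennreal (W \<omega>) * (\<integral>\<^sup>+y. ennreal (g y) * indicator {0..V \<omega>} y \<partial>lborel) \<partial>K)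
       = (\<integral>\<^sup>+y. ennreal (g y) * indicator {0..} y *
            (\<integral>\<^sup>+\<omega>. ennreal (W \<omega>) * indicator {\<omega>\<in>space K. y \<le> V \<omega>} \<omega> \<partial>K) \<partial>lborel)"
proof -
  interpret pair_sigma_finite K lborel
    using assms(1) by (simp add: lborel.sigma_finite_measure_axioms pair_sigma_finite_def)
  define H where "H = (\<lambda>\<omega> y. ennreal (W \<omega>) * ennreal (g y) * (if 0 \<le> y \<and> y \<le> V \<omega> then 1 else 0))"
  have "case_prod H \<in> borel_measurable (K \<Otimes>\<^sub>M lborel)"
    unfolding H_def by measurable
  then have "(\<integral>\<^sup>+\<omega>. (\<integral>\<^sup>+y. H \<omega> y \<partial>lborel) \<partial>K) = (\<integral>\<^sup>+y. (\<integral>\<^sup>+\<omega>. H \<omega> y \<partial>K) \<partial>lborel)"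
    by (rule Fubini'[symmetric])
  moreover have "(\<integral>\<^sup>+y. H \<omega> y \<partial>lborel)
      = ennreal (W \<omega>) * (\<integral>\<^sup>+y. ennreal (g y) * indicator {0..V \<omega>} y \<partial>lborel)" for \<omega>
    unfolding H_def
    by (subst nn_integral_cmult[symmetric], measurable)
       (auto intro!: nn_integral_cong simp: indicator_def)
  moreover have "(\<integral>\<^sup>+\<omega>. H \<omega> y \<partial>K) = ennreal (g y) * indicator {0..} y *
      (\<integral>\<^sup>+\<omega>. ennreal (W \<omega>) * indicator {\<omega>\<in>space K. y \<le> V \<omega>} \<omega> \<partial>K)" for y
    unfolding H_def
    by (subst nn_integral_cmult[symmetric], measurable)
       (auto intro!: nn_integral_cong simp: indicator_def mult_ac)
  ultimately show ?thesis
    by simp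
qed

text \<open>Layer cake: writing h(v) = h(0) + (integral of h' over [0, v]), Tonelli turns the
  weighted tail comparison into the comparison of the weighted means of h.\<close>

lemma nn_integral_weighted_tail_dominance:
  fixes M :: "'a measure" and N :: "'b measure" and W U :: "'a \<Rightarrow> real" and Y :: "'b \<Rightarrow> real"
    and h h' :: "real \<Rightarrow> real"
  assumes "prob_space M" "prob_space N"
    and [measurable]: "W \<in> borel_measurable M" "U \<in> borel_measurable M" "Y \<in> borel_measurable N"
      "h \<in> borel_measurable borel" "h' \<in> borel_measurable borel"
    and U0: "\<And>\<omega>. \<omega> \<in> space M \<Longrightarrow> U \<omega> \<ge> 0" and Y0: "\<And>\<omega>. \<omega> \<in> space N \<Longrightarrow> Y \<omega> \<ge> 0"
    and h': "\<And>v. v \<ge> 0 \<Longrightarrow> (h has_real_derivative h' v) (at v)" "\<And>v. v \<ge> 0 \<Longrightarrow> h' v \<ge> 0"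
    and h0: "h 0 \<ge> 0"
    and dom: "\<And>y. y \<ge> 0 \<Longrightarrow> (\<integral>\<^sup>+\<omega>. ennreal (W \<omega>) * indicator {\<omega>\<in>space M. y \<le> U \<omega>} \<omega> \<partial>M)
        \<le> (\<integral>\<^sup>+\<omega>. ennreal (W \<omega>) \<partial>M) * emeasure N {\<omega>\<in>space N. y \<le> Y \<omega>}"
  shows "(\<integral>\<^sup>+\<omega>. ennreal (W \<omega>) * ennreal (h (U \<omega>)) \<partial>M)
     \<le> (\<integral>\<^sup>+\<omega>. ennreal (W \<omega>) \<partial>M) * (\<integral>\<^sup>+\<omega>. ennreal (h (Y \<omega>)) \<partial>N)"
proof -
  interpret M: prob_space M by fact
  interpret N: prob_space N by fact
  define c where "c = (\<integral>\<^sup>+\<omega>. ennreal (W \<omega>) \<partial>M)"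
  define I where "I = (\<lambda>v. (\<integral>\<^sup>+y. ennreal (h' y) * indicator {0..v} y \<partial>lborel))"
  define TU where "TU = (\<lambda>y. \<integral>\<^sup>+\<omega>. ennreal (W \<omega>) * indicator {\<omega>\<in>space M. y \<le> U \<omega>} \<omega> \<partial>M)"
  define TY where "TY = (\<lambda>y. \<integral>\<^sup>+\<omega>. ennreal 1 * indicator {\<omega>\<in>space N. y \<le> Y \<omega>} \<omega> \<partial>N)"
  have I_eq: "I v = ennreal (h v - h 0)" if "v \<ge> 0" for v
    unfolding I_def using that h' by (intro nn_integral_FTC_Icc) auto
  have h_eq: "ennreal (h v) = ennreal (h 0) + I v" if "v \<ge> 0" for v
  proof -
    have "h 0 \<le> h v"
      using that h' by (intro deriv_nonneg_imp_mono[of 0 v h h']) auto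
    then show ?thesis
      using I_eq[OF that] h0 by (simp add: ennreal_plus[symmetric])
  qed
  have [measurable]: "(\<lambda>\<omega>. I (U \<omega>)) \<in> borel_measurable M"
    by (rule measurable_cong[where f="\<lambda>\<omega>. ennreal (h (U \<omega>) - h 0)", THEN iffD1])
       (simp_all add: I_eq U0)
  have [measurable]: "(\<lambda>\<omega>. I (Y \<omega>)) \<in> borel_measurable N"
    by (rule measurable_cong[where f="\<lambda>\<omega>. ennreal (h (Y \<omega>) - h 0)", THEN iffD1])
       (simp_all add: I_eq Y0)
  have "(\<integral>\<^sup>+\<omega>. ennreal (W \<omega>) * I (U \<omega>) \<partial>M)
      = (\<integral>\<^sup>+y. ennreal (h' y) * indicator {0..} y * TU y \<partial>lborel)"
    unfolding I_def TU_def TY_def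
    by (rule nn_integral_weighted_Icc_swap) (simp_all add: M.sigma_finite_measure_axioms)
  also have "\<dots> \<le> (\<integral>\<^sup>+y. c * (ennreal (h' y) * indicator {0..} y * TY y) \<partial>lborel)"
  proof (rule nn_integral_mono)
    fix y :: real
    show "ennreal (h' y) * indicator {0..} y * TU y
        \<le> c * (ennreal (h' y) * indicator {0..} y * TY y)"
      using mult_left_mono[OF dom, of y "ennreal (h' y)"]
      by (cases "y \<ge> 0") (simp_all add: TU_def TY_def c_def mult_ac)
  qed
  also have "\<dots> = c * (\<integral>\<^sup>+\<omega>. I (Y \<omega>) \<partial>N)"
    unfolding I_def TU_def TY_def
    using nn_integral_weighted_Icc_swap[of N "\<lambda>_. 1" Y h']
    by (subst nn_integral_cmult) (simp_all add: N.sigma_finite_measure_axioms)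
  finally have "(\<integral>\<^sup>+\<omega>. ennreal (W \<omega>) * I (U \<omega>) \<partial>M) \<le> c * (\<integral>\<^sup>+\<omega>. I (Y \<omega>) \<partial>N)" .
  moreover have "(\<integral>\<^sup>+\<omega>. ennreal (W \<omega>) * ennreal (h (U \<omega>)) \<partial>M)
      = (\<integral>\<^sup>+\<omega>. ennreal (W \<omega>) * ennreal (h 0) + ennreal (W \<omega>) * I (U \<omega>) \<partial>M)"
    by (intro nn_integral_cong) (simp add: h_eq[OF U0] distrib_left)
  moreover have "\<dots> = c * ennreal (h 0) + (\<integral>\<^sup>+\<omega>. ennreal (W \<omega>) * I (U \<omega>) \<partial>M)"
    unfolding c_def by (simp add: nn_integral_add nn_integral_multc)
  moreover have "(\<integral>\<^sup>+\<omega>. ennreal (h (Y \<omega>)) \<partial>N) = (\<integral>\<^sup>+\<omega>. ennreal (h 0) + I (Y \<omega>) \<partial>N)"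
    by (intro nn_integral_cong) (simp add: h_eq[OF Y0])
  moreover have "\<dots> = ennreal (h 0) + (\<integral>\<^sup>+\<omega>. I (Y \<omega>) \<partial>N)"
    by (simp add: nn_integral_add N.emeasure_space_1)
  ultimately show ?thesis
    unfolding c_def[symmetric] by (simp add: distrib_left add_left_mono)
qed

lemma integral_weighted_tail_dominance:
  fixes M :: "'a measure" and N :: "'b measure" and W U :: "'a \<Rightarrow> real" and Y :: "'b \<Rightarrow> real"
    and h h' :: "real \<Rightarrow> real"
  assumes M: "prob_space M" and N: "prob_space N"
    and [measurable]: "W \<in> borel_measurable M" "U \<in> borel_measurable M" "Y \<in> borel_measurable N"
      "h \<in> borel_measurable borel" "h' \<in> borel_measurable borel"
    and W0: "\<And>\<omega>. \<omega> \<in> space M \<Longrightarrow> W \<omega> \<ge> 0"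
    and U0: "\<And>\<omega>. \<omega> \<in> space M \<Longrightarrow> U \<omega> \<ge> 0" and Y0: "\<And>\<omega>. \<omega> \<in> space N \<Longrightarrow> Y \<omega> \<ge> 0"
    and h': "\<And>v. v \<ge> 0 \<Longrightarrow> (h has_real_derivative h' v) (at v)" "\<And>v. v \<ge> 0 \<Longrightarrow> h' v \<ge> 0"
    and h0: "h 0 \<ge> 0"
    and int: "integrable M W" "integrable M (\<lambda>\<omega>. W \<omega> * h (U \<omega>))" "integrable N (\<lambda>\<omega>. h (Y \<omega>))"
    and dom: "\<And>y. y \<ge> 0 \<Longrightarrow> (\<integral>\<omega>. W \<omega> * indicator {\<omega>\<in>space M. y \<le> U \<omega>} \<omega> \<partial>M)
        \<le> (\<integral>\<omega>. W \<omega> \<partial>M) * measure N {\<omega>\<in>space N. y \<le> Y \<omega>}"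
  shows "(\<integral>\<omega>. W \<omega> * h (U \<omega>) \<partial>M) \<le> (\<integral>\<omega>. W \<omega> \<partial>M) * (\<integral>\<omega>. h (Y \<omega>) \<partial>N)"
proof -
  interpret M: prob_space M by fact
  interpret N: prob_space N by fact
  have h_nonneg: "h v \<ge> 0" if "v \<ge> 0" for v
    using that h' h0 deriv_nonneg_imp_mono[of 0 v h h'] by fastforce
  have W_int: "(\<integral>\<^sup>+\<omega>. ennreal (W \<omega>) \<partial>M) = ennreal (\<integral>\<omega>. W \<omega> \<partial>M)"
    using int(1) W0 by (intro nn_integral_eq_integral) auto
  have hY_int: "(\<integral>\<^sup>+\<omega>. ennreal (h (Y \<omega>)) \<partial>N) = ennreal (\<integral>\<omega>. h (Y \<omega>) \<partial>N)"
    using int(3) by (intro nn_integral_eq_integral) (auto simp: h_nonneg Y0)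
  have WhU_int: "(\<integral>\<^sup>+\<omega>. ennreal (W \<omega>) * ennreal (h (U \<omega>)) \<partial>M) = ennreal (\<integral>\<omega>. W \<omega> * h (U \<omega>) \<partial>M)"
    using int(2) W0 U0 h_nonneg
    by (subst nn_integral_eq_integral[symmetric]) (auto simp: ennreal_mult intro!: nn_integral_cong)
  have W_nonneg: "(\<integral>\<omega>. W \<omega> \<partial>M) \<ge> 0" and hY_nonneg: "(\<integral>\<omega>. h (Y \<omega>) \<partial>N) \<ge> 0"
    by (simp_all add: W0 Y0 h_nonneg)
  have "(\<integral>\<^sup>+\<omega>. ennreal (W \<omega>) * ennreal (h (U \<omega>)) \<partial>M)
     \<le> (\<integral>\<^sup>+\<omega>. ennreal (W \<omega>) \<partial>M) * (\<integral>\<^sup>+\<omega>. ennreal (h (Y \<omega>)) \<partial>N)"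
  proof (rule nn_integral_weighted_tail_dominance[OF M N _ _ _ _ _ U0 Y0 h' h0])
    fix y :: real
    assume y: "y \<ge> 0"
    have int_ind: "integrable M (\<lambda>\<omega>. W \<omega> * indicator {\<omega>\<in>space M. y \<le> U \<omega>} \<omega>)"
      by (rule Bochner_Integration.integrable_bound[OF int(1)]) (auto simp: indicator_def W0)
    have "(\<integral>\<^sup>+\<omega>. ennreal (W \<omega>) * indicator {\<omega>\<in>space M. y \<le> U \<omega>} \<omega> \<partial>M)
        = ennreal (\<integral>\<omega>. W \<omega> * indicator {\<omega>\<in>space M. y \<le> U \<omega>} \<omega> \<partial>M)"
      using int_ind W0
      by (subst nn_integral_eq_integral[symmetric]) (auto intro!: nn_integral_cong simp: indicator_def)
    also have "\<dots> \<le> ennreal ((\<integral>\<omega>. W \<omega> \<partial>M) * measure N {\<omega>\<in>space N. y \<le> Y \<omega>})"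
      using dom[OF y] by (rule ennreal_leI)
    also have "\<dots> = (\<integral>\<^sup>+\<omega>. ennreal (W \<omega>) \<partial>M) * emeasure N {\<omega>\<in>space N. y \<le> Y \<omega>}"
      by (simp add: W_int N.emeasure_eq_measure ennreal_mult W_nonneg)
    finally show "(\<integral>\<^sup>+\<omega>. ennreal (W \<omega>) * indicator {\<omega>\<in>space M. y \<le> U \<omega>} \<omega> \<partial>M)
        \<le> (\<integral>\<^sup>+\<omega>. ennreal (W \<omega>) \<partial>M) * emeasure N {\<omega>\<in>space N. y \<le> Y \<omega>}" .
  qed simp_all
  then show ?thesis
    using W_int hY_int WhU_int W_nonneg hY_nonneg by (simp add: ennreal_mult[symmetric])
qed

lemma (in sigma_finite_subalgebra) integral_weighted_le_of_real_cond_exp_le: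
  fixes W g :: "'a \<Rightarrow> real"
  assumes int: "integrable M W" "integrable M (\<lambda>\<omega>. W \<omega> * g \<omega>)"
    and [measurable]: "W \<in> borel_measurable F" "g \<in> borel_measurable M"
    and W0: "\<And>\<omega>. \<omega> \<in> space M \<Longrightarrow> 0 \<le> W \<omega>"
    and le: "AE \<omega> in M. W \<omega> \<noteq> 0 \<longrightarrow> real_cond_exp M F g \<omega> \<le> c"
  shows "(\<integral>\<omega>. W \<omega> * g \<omega> \<partial>M) \<le> c * (\<integral>\<omega>. W \<omega> \<partial>M)"
proof -
  have "(\<integral>\<omega>. W \<omega> * g \<omega> \<partial>M) = (\<integral>\<omega>. W \<omega> * real_cond_exp M F g \<omega> \<partial>M)"
    using real_cond_exp_intg(2)[OF int(2)] by simp
  also have "\<dots> \<le> (\<integral>\<omega>. W \<omega> * c \<partial>M)"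
  proof (rule integral_mono_AE)
    show "integrable M (\<lambda>\<omega>. W \<omega> * real_cond_exp M F g \<omega>)"
      using real_cond_exp_intg(1)[OF int(2)] by simp
    show "integrable M (\<lambda>\<omega>. W \<omega> * c)"
      using int(1) by simp
    show "AE \<omega> in M. W \<omega> * real_cond_exp M F g \<omega> \<le> W \<omega> * c"
      using le AE_space by eventually_elim (force intro: mult_left_mono W0)
  qed
  finally show ?thesis
    by (simp add: mult.commute)
qed

lemma (in prob_space) prob_ge_le_exp_expectation:
  fixes Z :: "'a \<Rightarrow> real"
  assumes [measurable]: "Z \<in> borel_measurable M"
    and \<eta>: "\<eta> > 0" and int: "integrable M (\<lambda>\<omega>. exp (\<eta> * Z \<omega>))"
  shows "prob {\<omega>\<in>space M. z \<le> Z \<omega>} \<le> exp (- \<eta> * z) * expectation (\<lambda>\<omega>. exp (\<eta> * Z \<omega>))"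
proof -
  have "prob {\<omega>\<in>space M. z \<le> Z \<omega>} = expectation (indicator {\<omega>\<in>space M. z \<le> Z \<omega>})"
    by simp
  also have "\<dots> \<le> expectation (\<lambda>\<omega>. exp (- \<eta> * z) * exp (\<eta> * Z \<omega>))"
  proof (rule integral_mono)
    show "integrable M (\<lambda>\<omega>. exp (- \<eta> * z) * exp (\<eta> * Z \<omega>))"
      using int by simp
    fix \<omega>
    have "z \<le> Z \<omega> \<Longrightarrow> 1 \<le> exp (- \<eta> * z + \<eta> * Z \<omega>)"
      using \<eta> by (simp add: algebra_simps mult_left_mono)
    then show "indicator {\<omega>\<in>space M. z \<le> Z \<omega>} \<omega> \<le> exp (- \<eta> * z) * exp (\<eta> * Z \<omega>)"
      by (auto simp: indicator_def mult_exp_exp)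
  qed (simp add: integrable_indicator_iff emeasure_eq_measure)
  finally show ?thesis
    by simp
qed

lemma (in prob_space) expectation_le_exp_expectation_divide:
  fixes Z :: "'a \<Rightarrow> real"
  assumes "integrable M Z" and \<eta>: "\<eta> > 0" and "integrable M (\<lambda>\<omega>. exp (\<eta> * Z \<omega>))"
  shows "expectation Z \<le> expectation (\<lambda>\<omega>. exp (\<eta> * Z \<omega>)) / \<eta>"
proof -
  have "Z \<omega> \<le> exp (\<eta> * Z \<omega>) / \<eta>" for \<omega>
  proof -
    have "\<eta> * Z \<omega> \<le> exp (\<eta> * Z \<omega>)"
      using exp_ge_add_one_self[of "\<eta> * Z \<omega>"] by linarith
    then show ?thesis
      using \<eta> by (simp add: pos_le_divide_eq mult.commute)
  qed
  then have "expectation Z \<le> expectation (\<lambda>\<omega>. exp (\<eta> * Z \<omega>) / \<eta>)"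
    using assms by (intro integral_mono) auto
  then show ?thesis
    by simp
qed

text \<open>The process phi t plays the role of f(x_t) and fstar of f(x*); the domain X only enters
  through the range bound, with F = sup f - inf f.\<close>

locale descent_gap =
  fixes M :: "'a measure" and Fs :: "nat \<Rightarrow> 'a measure" and \<phi> :: "nat \<Rightarrow> 'a \<Rightarrow> real"
    and fstar F :: real and \<alpha> :: "nat \<Rightarrow> real" and \<kappa> B lam G :: real
    and N :: "'b measure" and Y :: "'b \<Rightarrow> real"
  assumes prob_M: "prob_space M"
    and subalg: "\<And>t. subalgebra M (Fs t)"
    and \<phi>_adapted: "\<And>t. \<phi> t \<in> borel_measurable (Fs t)"
    and \<phi>_range: "\<And>t \<omega>. \<omega> \<in> space M \<Longrightarrow> fstar \<le> \<phi> t \<omega> \<and> \<phi> t \<omega> \<le> fstar + F"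
    and \<alpha>_pos: "\<And>t. \<alpha> t > 0" and \<alpha>_decseq: "decseq \<alpha>"
    and \<alpha>_relative_decrement: "(\<lambda>t. (\<alpha> t - \<alpha> (Suc t)) / \<alpha> t) \<longlonglongrightarrow> 0"
    and \<kappa>_pos: "\<kappa> > 0" and B_pos: "B > 0"
    and drift: "\<And>t. AE \<omega> in M. \<alpha> t * B \<le> \<phi> t \<omega> - fstar \<longrightarrow>
      real_cond_exp M (Fs t) (\<lambda>\<omega>. \<phi> (Suc t) \<omega> - \<phi> t \<omega>) \<omega> \<le> - 2 * \<alpha> t * \<kappa>"
    and lam_pos: "lam > 0" and prob_N: "prob_space N"
    and Y_measurable [measurable]: "Y \<in> borel_measurable N"
    and Y_nonneg: "\<And>\<omega>. \<omega> \<in> space N \<Longrightarrow> 0 \<le> Y \<omega>"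
    and exp_Y_integrable: "integrable N (\<lambda>\<omega>. exp (lam * Y \<omega>))"
    and increment_tail: "\<And>t y. 0 \<le> y \<Longrightarrow> AE \<omega> in M.
      real_cond_exp M (Fs t) (indicator {\<omega>'\<in>space M. \<alpha> t * y \<le> \<bar>\<phi> (Suc t) \<omega>' - \<phi> t \<omega>'\<bar>}) \<omega>
        \<le> measure N {\<omega>'\<in>space N. y \<le> Y \<omega>'}"
    and G_pos: "0 < G" and G_le_1: "G \<le> 1"
    and \<alpha>_half_index: "\<And>t. 1 \<le> t \<Longrightarrow> sqrt G * \<alpha> (t div 2) \<le> \<alpha> t"
begin

sublocale M: prob_space M
  by (rule prob_M)

sublocale N: prob_space N
  by (rule prob_N)

abbreviation "Dc \<equiv> Dconst N Y lam \<kappa>"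
abbreviation "Ec \<equiv> Econst N Y lam \<kappa>"
abbreviation "Qc \<equiv> Qconst N Y lam \<kappa>"

definition L :: "nat \<Rightarrow> 'a \<Rightarrow> real" where
  "L t \<omega> = \<phi> t \<omega> - fstar - \<alpha> t * B"

definition dL :: "nat \<Rightarrow> 'a \<Rightarrow> real" where
  "dL t \<omega> = \<phi> (Suc t) \<omega> - \<phi> t \<omega> + (\<alpha> t - \<alpha> (Suc t)) * B"

definition U :: "nat \<Rightarrow> 'a \<Rightarrow> real" where
  "U t \<omega> = \<bar>\<phi> (Suc t) \<omega> - \<phi> t \<omega>\<bar> / \<alpha> t"

definition psi :: "real \<Rightarrow> real" where
  "psi v = exp (lam * (v + \<kappa> / 2)) - 1 - lam * (v + \<kappa> / 2)"

lemma L_Suc: "L (Suc t) \<omega> = L t \<omega> + dL t \<omega>"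
  by (simp add: L_def dL_def algebra_simps)

lemma measurable_Fs_imp_measurable: "W \<in> borel_measurable (Fs t) \<Longrightarrow> W \<in> borel_measurable M"
  by (rule measurable_from_subalg[OF subalg])

lemma \<phi>_measurable [measurable]: "\<phi> t \<in> borel_measurable M"
  by (rule measurable_Fs_imp_measurable[OF \<phi>_adapted])

lemma L_measurable_Fs [measurable]: "L t \<in> borel_measurable (Fs t)"
  unfolding L_def using \<phi>_adapted by measurable

lemma L_measurable [measurable]: "L t \<in> borel_measurable M"
  unfolding L_def by measurable

lemma dL_measurable [measurable]: "dL t \<in> borel_measurable M"
  unfolding dL_def by measurable

lemma U_measurable [measurable]: "U t \<in> borel_measurable M"
  unfolding U_def by measurable

lemma sigma_finite_subalgebra_Fs: "sigma_finite_subalgebra M (Fs t)"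
  by (intro finite_measure_subalgebra_is_sigma_finite)
     (simp add: finite_measure_subalgebra_def finite_measure_subalgebra_axioms_def subalg
        M.finite_measure_axioms)

lemma F_nonneg: "F \<ge> 0"
proof -
  obtain \<omega> where "\<omega> \<in> space M"
    using M.not_empty by blast
  then show ?thesis
    using \<phi>_range[of \<omega> 0] by simp
qed

lemma increment_abs_le: "\<omega> \<in> space M \<Longrightarrow> \<bar>\<phi> (Suc t) \<omega> - \<phi> t \<omega>\<bar> \<le> F"
  using \<phi>_range[of \<omega> t] \<phi>_range[of \<omega> "Suc t"] by auto

lemma U_nonneg: "0 \<le> U t \<omega>"
  unfolding U_def using \<alpha>_pos[of t] by simp

lemma U_le: "\<omega> \<in> space M \<Longrightarrow> U t \<omega> \<le> F / \<alpha> t"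
  unfolding U_def using increment_abs_le \<alpha>_pos[of t] by (simp add: divide_right_mono)

lemma L_le_F: "\<omega> \<in> space M \<Longrightarrow> L t \<omega> \<le> F"
  unfolding L_def using \<phi>_range[of \<omega> t] \<alpha>_pos[of t] B_pos by (smt (verit) mult_pos_pos)

lemma L_abs_le: "\<omega> \<in> space M \<Longrightarrow> \<bar>L t \<omega>\<bar> \<le> F + \<alpha> t * B"
  unfolding L_def using \<phi>_range[of \<omega> t] \<alpha>_pos[of t] B_pos F_nonneg
  by (smt (verit) mult_pos_pos)

lemma integrable_bounded:
  fixes g :: "'a \<Rightarrow> real"
  assumes "g \<in> borel_measurable M" "\<And>\<omega>. \<omega> \<in> space M \<Longrightarrow> \<bar>g \<omega>\<bar> \<le> C"
  shows "integrable M g"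
  using assms by (intro M.integrable_const_bound[where B=C]) auto

lemma integrable_exp_L: "\<eta> \<ge> 0 \<Longrightarrow> integrable M (\<lambda>\<omega>. exp (\<eta> * L t \<omega>))"
  by (rule integrable_bounded[where C="exp (\<eta> * F)"]) (auto intro: mult_left_mono L_le_F)

lemma step_decrement_bounds:
  assumes "T0 \<alpha> \<kappa> B \<le> t"
  shows "0 \<le> (\<alpha> t - \<alpha> (Suc t)) * B" "(\<alpha> t - \<alpha> (Suc t)) * B \<le> \<alpha> t * \<kappa> / 2"
proof -
  show "0 \<le> (\<alpha> t - \<alpha> (Suc t)) * B"
    using \<alpha>_decseq B_pos by (simp add: decseq_Suc_iff)
  have "eventually (\<lambda>s. (\<alpha> s - \<alpha> (Suc s)) / \<alpha> s < \<kappa> / (2 * B)) sequentially"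
    using \<kappa>_pos B_pos by (intro order_tendstoD(2)[OF \<alpha>_relative_decrement]) simp
  then have "\<forall>s\<ge>T0 \<alpha> \<kappa> B. (\<alpha> s - \<alpha> (Suc s)) / \<alpha> s < \<kappa> / (2 * B)"
    unfolding T0_def eventually_sequentially by (rule LeastI_ex)
  then have "(\<alpha> t - \<alpha> (Suc t)) / \<alpha> t < \<kappa> / (2 * B)"
    using assms by auto
  then show "(\<alpha> t - \<alpha> (Suc t)) * B \<le> \<alpha> t * \<kappa> / 2"
    using \<alpha>_pos[of t] B_pos by (simp add: field_simps)
qed

lemma integrable_exp_Z: "integrable N (\<lambda>\<omega>. exp (lam * (Y \<omega> + \<kappa> / 2)))"
proof -
  have "integrable N (\<lambda>\<omega>. exp (lam * \<kappa> / 2) * exp (lam * Y \<omega>))"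
    using exp_Y_integrable by simp
  moreover have "exp (lam * \<kappa> / 2) * exp (lam * Y \<omega>) = exp (lam * (Y \<omega> + \<kappa> / 2))" for \<omega>
    by (simp add: exp_add[symmetric] algebra_simps)
  ultimately show ?thesis
    by simp
qed

lemma Dc_ge_1: "Dc \<ge> 1"
proof -
  have "(\<integral>\<omega>. 1 \<partial>N) \<le> Dc"
    unfolding Dconst_def using Y_nonneg lam_pos \<kappa>_pos by (intro integral_mono integrable_exp_Z) auto
  then show ?thesis
    by (simp add: N.prob_space)
qed

lemma psi_nonneg: "0 \<le> psi v"
  unfolding psi_def using exp_ge_add_one_self[of "lam * (v + \<kappa> / 2)"] by linarith

lemma psi_le_exp:
  assumes "0 \<le> v"
  shows "psi v \<le> exp (lam * (v + \<kappa> / 2))"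
proof -
  have "0 \<le> lam * (v + \<kappa> / 2)"
    using assms lam_pos \<kappa>_pos by simp
  then show ?thesis
    unfolding psi_def by linarith
qed

lemma psi_measurable [measurable]: "psi \<in> borel_measurable borel"
  unfolding psi_def by measurable

lemma integrable_psi_Y: "integrable N (\<lambda>\<omega>. psi (Y \<omega>))"
  by (rule Bochner_Integration.integrable_bound[OF integrable_exp_Z])
     (auto intro!: AE_I2 simp: psi_nonneg psi_le_exp Y_nonneg psi_def[symmetric])

lemma integral_psi_Y: "(\<integral>\<omega>. psi (Y \<omega>) \<partial>N) = lam\<^sup>2 * Ec"
  unfolding Econst_def psi_def using lam_pos by simp

lemma Ec_ge: "\<kappa>\<^sup>2 / 8 \<le> Ec"
proof -
  have "(\<integral>\<omega>. \<kappa>\<^sup>2 / 8 \<partial>N) \<le> Ec"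
    unfolding Econst_def
  proof (rule integral_mono)
    show "integrable N (\<lambda>\<omega>. (exp (lam * (Y \<omega> + \<kappa> / 2)) - 1 - lam * (Y \<omega> + \<kappa> / 2)) / lam\<^sup>2)"
      using integrable_psi_Y unfolding psi_def by simp
    fix \<omega>
    assume "\<omega> \<in> space N"
    then have Z: "\<kappa> / 2 \<le> Y \<omega> + \<kappa> / 2"
      using Y_nonneg by simp
    have "\<kappa>\<^sup>2 / 8 = (lam * (\<kappa> / 2))\<^sup>2 / 2 / lam\<^sup>2"
      using lam_pos by (simp add: power_mult_distrib power_divide)
    also have "\<dots> \<le> (lam * (Y \<omega> + \<kappa> / 2))\<^sup>2 / 2 / lam\<^sup>2"
      using Z lam_pos \<kappa>_pos by (intro divide_right_mono power_mono mult_left_mono) auto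
    also have "\<dots> \<le> (exp (lam * (Y \<omega> + \<kappa> / 2)) - 1 - lam * (Y \<omega> + \<kappa> / 2)) / lam\<^sup>2"
      using Z lam_pos \<kappa>_pos by (intro divide_right_mono exp_excess_ge_half_square) auto
    finally show "\<kappa>\<^sup>2 / 8 \<le> (exp (lam * (Y \<omega> + \<kappa> / 2)) - 1 - lam * (Y \<omega> + \<kappa> / 2)) / lam\<^sup>2" .
  qed simp
  then show ?thesis
    by (simp add: N.prob_space)
qed

lemma Ec_pos: "Ec > 0"
  using Ec_ge \<kappa>_pos by (smt (verit) zero_less_power divide_pos_pos)

lemma Qc_pos: "Qc > 0" and Qc_le_lam: "Qc \<le> lam" and Qc_Ec_le: "Qc * Ec \<le> \<kappa> / 2"
proof -
  show "Qc > 0" and "Qc \<le> lam"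
    unfolding Qconst_def using lam_pos \<kappa>_pos Ec_pos by simp_all
  have "Qc \<le> \<kappa> / (2 * Ec)"
    unfolding Qconst_def by simp
  then show "Qc * Ec \<le> \<kappa> / 2"
    using Ec_pos by (simp add: pos_le_divide_eq)
qed

text \<open>The conditional hypotheses are only ever used integrated against such weights.\<close>

definition Fs_weight :: "nat \<Rightarrow> ('a \<Rightarrow> real) \<Rightarrow> bool" where
  "Fs_weight t W \<longleftrightarrow> W \<in> borel_measurable (Fs t) \<and> (\<exists>K. \<forall>\<omega>\<in>space M. 0 \<le> W \<omega> \<and> W \<omega> \<le> K)"

lemma Fs_weightI:
  "W \<in> borel_measurable (Fs t) \<Longrightarrow> (\<And>\<omega>. \<omega> \<in> space M \<Longrightarrow> 0 \<le> W \<omega> \<and> W \<omega> \<le> K) \<Longrightarrow> Fs_weight t W"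
  unfolding Fs_weight_def by blast

lemma Fs_weight_nonneg: "Fs_weight t W \<Longrightarrow> \<omega> \<in> space M \<Longrightarrow> 0 \<le> W \<omega>"
  unfolding Fs_weight_def by blast

lemma Fs_weight_measurable:
  "Fs_weight t W \<Longrightarrow> W \<in> borel_measurable (Fs t)"
  "Fs_weight t W \<Longrightarrow> W \<in> borel_measurable M"
  unfolding Fs_weight_def by (auto intro: measurable_Fs_imp_measurable)

lemma integrable_weight_mult:
  assumes W: "Fs_weight t W" and [measurable]: "g \<in> borel_measurable M"
    and g: "\<And>\<omega>. \<omega> \<in> space M \<Longrightarrow> \<bar>g \<omega>\<bar> \<le> C"
  shows "integrable M (\<lambda>\<omega>. W \<omega> * g \<omega>)"
proof -
  obtain K where K: "\<And>\<omega>. \<omega> \<in> space M \<Longrightarrow> 0 \<le> W \<omega> \<and> W \<omega> \<le> K"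
    using W unfolding Fs_weight_def by blast
  have [measurable]: "W \<in> borel_measurable M"
    by (rule Fs_weight_measurable(2)[OF W])
  show ?thesis
  proof (rule integrable_bounded[where C="K * C"])
    fix \<omega>
    assume "\<omega> \<in> space M"
    then have "W \<omega> * \<bar>g \<omega>\<bar> \<le> K * C"
      using K[of \<omega>] g[of \<omega>] by (intro mult_mono) auto
    then show "\<bar>W \<omega> * g \<omega>\<bar> \<le> K * C"
      using K[of \<omega>] \<open>\<omega> \<in> space M\<close> by (simp add: abs_mult)
  qed simp
qed

lemma integrable_weight: "Fs_weight t W \<Longrightarrow> integrable M W"
  using integrable_weight_mult[of t W "\<lambda>_. 1" 1] by simp

lemma weighted_drift_le:
  assumes W: "Fs_weight t W"
    and supp: "\<And>\<omega>. \<omega> \<in> space M \<Longrightarrow> W \<omega> \<noteq> 0 \<Longrightarrow> \<alpha> t * B \<le> \<phi> t \<omega> - fstar"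
  shows "(\<integral>\<omega>. W \<omega> * (\<phi> (Suc t) \<omega> - \<phi> t \<omega>) \<partial>M) \<le> - 2 * \<alpha> t * \<kappa> * (\<integral>\<omega>. W \<omega> \<partial>M)"
proof (rule sigma_finite_subalgebra.integral_weighted_le_of_real_cond_exp_le
    [OF sigma_finite_subalgebra_Fs[of t] integrable_weight[OF W]])
  show "integrable M (\<lambda>\<omega>. W \<omega> * (\<phi> (Suc t) \<omega> - \<phi> t \<omega>))"
    by (rule integrable_weight_mult[OF W _ increment_abs_le]) simp_all
  show "AE \<omega> in M. W \<omega> \<noteq> 0 \<longrightarrow>
      real_cond_exp M (Fs t) (\<lambda>\<omega>. \<phi> (Suc t) \<omega> - \<phi> t \<omega>) \<omega> \<le> - 2 * \<alpha> t * \<kappa>"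
    using drift[of t] AE_space by eventually_elim (auto dest: supp)
qed (use W in \<open>simp_all add: Fs_weight_measurable Fs_weight_nonneg\<close>)

lemma weighted_increment_dominance:
  fixes h h' :: "real \<Rightarrow> real"
  assumes W: "Fs_weight t W"
    and [measurable]: "h \<in> borel_measurable borel" "h' \<in> borel_measurable borel"
    and h': "\<And>v. v \<ge> 0 \<Longrightarrow> (h has_real_derivative h' v) (at v)" "\<And>v. v \<ge> 0 \<Longrightarrow> h' v \<ge> 0"
    and h0: "h 0 \<ge> 0" and hY: "integrable N (\<lambda>\<omega>. h (Y \<omega>))"
  shows "(\<integral>\<omega>. W \<omega> * h (U t \<omega>) \<partial>M) \<le> (\<integral>\<omega>. W \<omega> \<partial>M) * (\<integral>\<omega>. h (Y \<omega>) \<partial>N)"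
proof -
  have [measurable]: "W \<in> borel_measurable (Fs t)" "W \<in> borel_measurable M"
    using Fs_weight_measurable[OF W] by measurable
  have h_mono: "h a \<le> h b" if "0 \<le> a" "a \<le> b" for a b
    using that h' by (intro deriv_nonneg_imp_mono[of a b h h']) auto
  have "\<bar>h (U t \<omega>)\<bar> \<le> h (F / \<alpha> t)" if "\<omega> \<in> space M" for \<omega>
    using h_mono[OF U_nonneg U_le[OF that]] h_mono[OF order_refl U_nonneg, of t \<omega>] h0 by simp
  then have int: "integrable M (\<lambda>\<omega>. W \<omega> * h (U t \<omega>))"
    by (intro integrable_weight_mult[OF W]) simp_all
  show ?thesis
  proof (rule integral_weighted_tail_dominance
      [OF prob_M prob_N _ _ _ _ _ _ _ Y_nonneg h' h0 integrable_weight[OF W] int hY])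
    fix y :: real
    assume y: "y \<ge> 0"
    have "{\<omega>\<in>space M. y \<le> U t \<omega>} = {\<omega>\<in>space M. \<alpha> t * y \<le> \<bar>\<phi> (Suc t) \<omega> - \<phi> t \<omega>\<bar>}"
      unfolding U_def using \<alpha>_pos[of t] by (auto simp: pos_le_divide_eq mult.commute)
    moreover have "(\<integral>\<omega>. W \<omega> * indicator {\<omega>\<in>space M. \<alpha> t * y \<le> \<bar>\<phi> (Suc t) \<omega> - \<phi> t \<omega>\<bar>} \<omega> \<partial>M)
        \<le> measure N {\<omega>\<in>space N. y \<le> Y \<omega>} * (\<integral>\<omega>. W \<omega> \<partial>M)"
      by (rule sigma_finite_subalgebra.integral_weighted_le_of_real_cond_exp_le
          [OF sigma_finite_subalgebra_Fs[of t] integrable_weight[OF W]])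
         (use W increment_tail[OF y, of t] in \<open>auto intro!: integrable_weight_mult[where C=1]
            simp: Fs_weight_nonneg Fs_weight_measurable elim: AE_mp\<close>)
    ultimately show "(\<integral>\<omega>. W \<omega> * indicator {\<omega>\<in>space M. y \<le> U t \<omega>} \<omega> \<partial>M)
        \<le> (\<integral>\<omega>. W \<omega> \<partial>M) * measure N {\<omega>\<in>space N. y \<le> Y \<omega>}"
      by (simp add: mult.commute)
  qed (use W in \<open>simp_all add: U_nonneg Fs_weight_nonneg\<close>)
qed

lemma weighted_psi_U_le: "Fs_weight t W \<Longrightarrow> (\<integral>\<omega>. W \<omega> * psi (U t \<omega>) \<partial>M) \<le> (\<integral>\<omega>. W \<omega> \<partial>M) * (lam\<^sup>2 * Ec)"
  unfolding integral_psi_Y[symmetric] using lam_pos \<kappa>_pos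
  by (intro weighted_increment_dominance[where h'="\<lambda>v. lam * (exp (lam * (v + \<kappa> / 2)) - 1)"]
      integrable_psi_Y)
     (auto intro!: derivative_eq_intros simp: psi_def psi_nonneg[unfolded psi_def] algebra_simps)

lemma dL_le: "\<omega> \<in> space M \<Longrightarrow> dL t \<omega> \<le> F + \<alpha> t * B"
  unfolding dL_def using increment_abs_le[of \<omega> t] \<alpha>_pos[of "Suc t"] B_pos
  by (smt (verit) mult_pos_pos mult_right_mono)

lemma integrable_weight_exp_dL:
  "Fs_weight t W \<Longrightarrow> \<eta> \<ge> 0 \<Longrightarrow> integrable M (\<lambda>\<omega>. W \<omega> * exp (\<eta> * dL t \<omega>))"
  by (rule integrable_weight_mult[where C="exp (\<eta> * (F + \<alpha> t * B))"])
     (auto intro: mult_left_mono dL_le)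

lemma abs_eta_dL_le:
  assumes "T0 \<alpha> \<kappa> B \<le> t" "\<eta> \<ge> 0"
  shows "\<bar>\<eta> * dL t \<omega>\<bar> \<le> \<eta> * \<alpha> t * (U t \<omega> + \<kappa> / 2)"
proof -
  have "\<bar>dL t \<omega>\<bar> \<le> \<bar>\<phi> (Suc t) \<omega> - \<phi> t \<omega>\<bar> + \<alpha> t * \<kappa> / 2"
    unfolding dL_def using step_decrement_bounds[OF assms(1)] by linarith
  also have "\<dots> = \<alpha> t * (U t \<omega> + \<kappa> / 2)"
    unfolding U_def using \<alpha>_pos[of t] by (simp add: field_simps)
  finally show ?thesis
    using assms(2) by (simp add: abs_mult mult.assoc mult_left_mono)
qed

lemma weighted_exp_dL_le_Dc:
  assumes t: "T0 \<alpha> \<kappa> B \<le> t" and \<eta>: "\<eta> > 0" "\<eta> * \<alpha> t \<le> lam" and W: "Fs_weight t W"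
  shows "(\<integral>\<omega>. W \<omega> * exp (\<eta> * dL t \<omega>) \<partial>M) \<le> Dc * (\<integral>\<omega>. W \<omega> \<partial>M)"
proof -
  define r where "r = \<eta> * \<alpha> t"
  define h where "h v = exp (r * (v + \<kappa> / 2))" for v
  have r: "0 < r" "r \<le> lam"
    unfolding r_def using \<eta> \<alpha>_pos[of t] by simp_all
  have h_le: "h (Y \<omega>) \<le> exp (lam * (Y \<omega> + \<kappa> / 2))" if "\<omega> \<in> space N" for \<omega>
    unfolding h_def using r Y_nonneg[OF that] \<kappa>_pos by (simp add: mult_right_mono)
  have hY: "integrable N (\<lambda>\<omega>. h (Y \<omega>))"
    by (rule Bochner_Integration.integrable_bound[OF integrable_exp_Z])
       (use h_le in \<open>auto simp: h_def intro!: AE_I2\<close>)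
  have "(\<integral>\<omega>. W \<omega> * exp (\<eta> * dL t \<omega>) \<partial>M) \<le> (\<integral>\<omega>. W \<omega> * h (U t \<omega>) \<partial>M)"
  proof (rule integral_mono)
    show "integrable M (\<lambda>\<omega>. W \<omega> * exp (\<eta> * dL t \<omega>))"
      using W \<eta> by (intro integrable_weight_exp_dL) auto
    show "integrable M (\<lambda>\<omega>. W \<omega> * h (U t \<omega>))"
      using r \<kappa>_pos U_le unfolding h_def
      by (intro integrable_weight_mult[OF W, where C="exp (r * (F / \<alpha> t + \<kappa> / 2))"]) auto
    fix \<omega>
    assume "\<omega> \<in> space M"
    have "\<eta> * dL t \<omega> \<le> r * (U t \<omega> + \<kappa> / 2)"
      using abs_le_D1[OF abs_eta_dL_le[OF t, of \<eta> \<omega>]] \<eta> unfolding r_def by simp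
    then show "W \<omega> * exp (\<eta> * dL t \<omega>) \<le> W \<omega> * h (U t \<omega>)"
      unfolding h_def using Fs_weight_nonneg[OF W \<open>\<omega> \<in> space M\<close>] by (simp add: mult_left_mono)
  qed
  also have "\<dots> \<le> (\<integral>\<omega>. W \<omega> \<partial>M) * (\<integral>\<omega>. h (Y \<omega>) \<partial>N)"
    using W r unfolding h_def
    by (intro weighted_increment_dominance[where h'="\<lambda>v. r * exp (r * (v + \<kappa> / 2))"] hY[unfolded h_def])
       (auto intro!: derivative_eq_intros)
  also have "\<dots> \<le> (\<integral>\<omega>. W \<omega> \<partial>M) * Dc"
    unfolding Dconst_def using W h_le
    by (intro mult_left_mono integral_mono hY integrable_exp_Z) (auto simp: Fs_weight_nonneg)
  finally show ?thesis
    by (simp add: mult.commute)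
qed

lemma exp_eta_dL_le_second_order:
  assumes t: "T0 \<alpha> \<kappa> B \<le> t" and \<eta>: "\<eta> > 0" "\<eta> * \<alpha> t \<le> lam"
  shows "exp (\<eta> * dL t \<omega>) \<le> 1 + \<eta> * dL t \<omega> + (\<eta> * \<alpha> t / lam)\<^sup>2 * psi (U t \<omega>)"
proof -
  have "\<bar>\<eta> * dL t \<omega>\<bar> \<le> \<eta> * \<alpha> t / lam * (lam * (U t \<omega> + \<kappa> / 2))"
    using abs_eta_dL_le[OF t, of \<eta> \<omega>] \<eta> lam_pos by simp
  then show ?thesis
    unfolding psi_def using \<eta> lam_pos \<kappa>_pos \<alpha>_pos[of t] U_nonneg[of t \<omega>]
    by (intro exp_le_second_order) auto
qed

lemma weighted_exp_dL_le_contraction: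
  assumes t: "T0 \<alpha> \<kappa> B \<le> t" and \<eta>: "\<eta> > 0" "\<eta> * \<alpha> t \<le> Qc" and W: "Fs_weight t W"
    and supp: "\<And>\<omega>. \<omega> \<in> space M \<Longrightarrow> W \<omega> \<noteq> 0 \<Longrightarrow> \<alpha> t * B \<le> \<phi> t \<omega> - fstar"
  shows "(\<integral>\<omega>. W \<omega> * exp (\<eta> * dL t \<omega>) \<partial>M) \<le> exp (- (\<eta> * \<kappa> * \<alpha> t)) * (\<integral>\<omega>. W \<omega> \<partial>M)"
proof -
  define r where "r = \<eta> * \<alpha> t"
  define c where "c = (\<alpha> t - \<alpha> (Suc t)) * B"
  define I where "I = (\<integral>\<omega>. W \<omega> \<partial>M)"
  define \<Delta> where "\<Delta> \<omega> = \<phi> (Suc t) \<omega> - \<phi> t \<omega>" for \<omega>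
  have r: "0 < r" "r \<le> Qc" "r \<le> lam"
    unfolding r_def using \<eta> \<alpha>_pos[of t] Qc_le_lam by simp_all
  have c: "\<eta> * c \<le> r * \<kappa> / 2"
    unfolding c_def r_def using mult_left_mono[OF step_decrement_bounds(2)[OF t], of \<eta>] \<eta> by simp
  have I: "I \<ge> 0"
    unfolding I_def using W by (simp add: Fs_weight_nonneg)
  have [measurable]: "W \<in> borel_measurable M" "\<Delta> \<in> borel_measurable M"
    using Fs_weight_measurable[OF W] unfolding \<Delta>_def by measurable
  have int_\<Delta>: "integrable M (\<lambda>\<omega>. W \<omega> * \<Delta> \<omega>)"
    unfolding \<Delta>_def by (rule integrable_weight_mult[OF W _ increment_abs_le]) simp_all
  have int_psi: "integrable M (\<lambda>\<omega>. W \<omega> * psi (U t \<omega>))"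
    using psi_nonneg order.trans[OF psi_le_exp[OF U_nonneg]] U_le lam_pos
    by (intro integrable_weight_mult[OF W, where C="exp (lam * (F / \<alpha> t + \<kappa> / 2))"]) auto
  have "(\<integral>\<omega>. W \<omega> * exp (\<eta> * dL t \<omega>) \<partial>M)
      \<le> (\<integral>\<omega>. W \<omega> + \<eta> * (W \<omega> * \<Delta> \<omega>) + (\<eta> * c) * W \<omega> + (r / lam)\<^sup>2 * (W \<omega> * psi (U t \<omega>)) \<partial>M)"
  proof (rule integral_mono)
    show "integrable M (\<lambda>\<omega>. W \<omega> * exp (\<eta> * dL t \<omega>))"
      using W \<eta> by (intro integrable_weight_exp_dL) auto
    show "integrable M (\<lambda>\<omega>. W \<omega> + \<eta> * (W \<omega> * \<Delta> \<omega>) + (\<eta> * c) * W \<omega> + (r / lam)\<^sup>2 * (W \<omega> * psi (U t \<omega>)))"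
      using integrable_weight[OF W] int_\<Delta> int_psi by simp
    fix \<omega>
    assume \<omega>: "\<omega> \<in> space M"
    show "W \<omega> * exp (\<eta> * dL t \<omega>) \<le> W \<omega> + \<eta> * (W \<omega> * \<Delta> \<omega>) + (\<eta> * c) * W \<omega> + (r / lam)\<^sup>2 * (W \<omega> * psi (U t \<omega>))"
      using mult_left_mono[OF exp_eta_dL_le_second_order[OF t \<eta>(1) r(3)[unfolded r_def]]
          Fs_weight_nonneg[OF W \<omega>]]
      unfolding dL_def \<Delta>_def c_def r_def by (simp add: algebra_simps)
  qed
  also have "\<dots> = I + \<eta> * (\<integral>\<omega>. W \<omega> * \<Delta> \<omega> \<partial>M) + (\<eta> * c) * I + (r / lam)\<^sup>2 * (\<integral>\<omega>. W \<omega> * psi (U t \<omega>) \<partial>M)"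
    unfolding I_def using integrable_weight[OF W] int_\<Delta> int_psi by simp
  also have "\<dots> \<le> I + \<eta> * (- 2 * \<alpha> t * \<kappa> * I) + (r * \<kappa> / 2) * I + (r / lam)\<^sup>2 * (I * (lam\<^sup>2 * Ec))"
    using weighted_drift_le[OF W supp] weighted_psi_U_le[OF W] c I \<eta>
    unfolding I_def \<Delta>_def
    by (intro add_mono mult_left_mono mult_right_mono) auto
  also have "\<dots> = I * (1 - r * \<kappa> - r * (\<kappa> / 2 - r * Ec))"
    using lam_pos by (simp add: algebra_simps power2_eq_square r_def)
  also have "\<dots> \<le> I * (1 - r * \<kappa>)"
    using r Qc_Ec_le I mult_right_mono[OF r(2) less_imp_le[OF Ec_pos]]
    by (intro mult_left_mono) auto
  also have "\<dots> \<le> I * exp (- (r * \<kappa>))"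
    using I exp_ge_add_one_self[of "- (r * \<kappa>)"] by (intro mult_left_mono) auto
  finally show ?thesis
    unfolding I_def r_def by (simp add: mult_ac)
qed

lemma expectation_exp_L_Suc_le:
  assumes t: "T0 \<alpha> \<kappa> B \<le> t" and \<eta>: "\<eta> > 0" "\<eta> * \<alpha> t \<le> Qc"
  shows "(\<integral>\<omega>. exp (\<eta> * L (Suc t) \<omega>) \<partial>M)
    \<le> exp (- (\<eta> * \<kappa> * \<alpha> t)) * (\<integral>\<omega>. exp (\<eta> * L t \<omega>) \<partial>M) + Dc"
proof -
  define W1 where "W1 \<omega> = (if 0 \<le> L t \<omega> then exp (\<eta> * L t \<omega>) else 0)" for \<omega>
  define W2 where "W2 \<omega> = (if 0 \<le> L t \<omega> then 0 else exp (\<eta> * L t \<omega>))" for \<omega>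
  have W1: "Fs_weight t W1"
    unfolding W1_def using \<eta> L_le_F by (intro Fs_weightI[where K="exp (\<eta> * F)"]) auto
  have W2_bounds: "0 \<le> W2 \<omega> \<and> W2 \<omega> \<le> 1" for \<omega>
  proof -
    have "L t \<omega> < 0 \<Longrightarrow> \<eta> * L t \<omega> \<le> 0"
      using \<eta> by (simp add: mult_nonneg_nonpos)
    then show ?thesis
      unfolding W2_def by auto
  qed
  have W2: "Fs_weight t W2"
    using W2_bounds by (intro Fs_weightI[where K=1]) (unfold W2_def, measurable)
  have split: "exp (\<eta> * L (Suc t) \<omega>) = W1 \<omega> * exp (\<eta> * dL t \<omega>) + W2 \<omega> * exp (\<eta> * dL t \<omega>)" for \<omega>
    unfolding W1_def W2_def L_Suc by (simp add: distrib_left exp_add)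
  have "(\<integral>\<omega>. W1 \<omega> * exp (\<eta> * dL t \<omega>) \<partial>M) \<le> exp (- (\<eta> * \<kappa> * \<alpha> t)) * (\<integral>\<omega>. W1 \<omega> \<partial>M)"
    using t \<eta> W1 by (rule weighted_exp_dL_le_contraction) (auto simp: W1_def L_def split: if_splits)
  also have "(\<integral>\<omega>. W1 \<omega> \<partial>M) \<le> (\<integral>\<omega>. exp (\<eta> * L t \<omega>) \<partial>M)"
    by (rule integral_mono[OF integrable_weight[OF W1] integrable_exp_L]) (use \<eta> in \<open>auto simp: W1_def\<close>)
  finally have part1: "(\<integral>\<omega>. W1 \<omega> * exp (\<eta> * dL t \<omega>) \<partial>M)
      \<le> exp (- (\<eta> * \<kappa> * \<alpha> t)) * (\<integral>\<omega>. exp (\<eta> * L t \<omega>) \<partial>M)"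
    by (simp add: mult_left_mono)
  have "(\<integral>\<omega>. W2 \<omega> * exp (\<eta> * dL t \<omega>) \<partial>M) \<le> Dc * (\<integral>\<omega>. W2 \<omega> \<partial>M)"
    using t \<eta>(1) order.trans[OF \<eta>(2) Qc_le_lam] W2 by (rule weighted_exp_dL_le_Dc)
  also have "\<dots> \<le> Dc * 1"
    using integrable_weight[OF W2] W2_bounds Dc_ge_1
    by (intro mult_left_mono M.integral_le_const) auto
  finally have part2: "(\<integral>\<omega>. W2 \<omega> * exp (\<eta> * dL t \<omega>) \<partial>M) \<le> Dc"
    by simp
  show ?thesis
    unfolding split using part1 part2 integrable_weight_exp_dL[OF W1] integrable_weight_exp_dL[OF W2] \<eta>
    by simp
qed

lemma \<alpha>_ge_sqrt_power: "1 \<le> t div 2 ^ n \<Longrightarrow> sqrt G ^ n * \<alpha> (t div 2 ^ n) \<le> \<alpha> t"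
proof (induction n)
  case (Suc n)
  have index: "t div 2 ^ Suc n = t div 2 ^ n div 2"
    by (metis div_mult2_eq power_Suc2)
  have "1 \<le> t div 2 ^ n"
    using Suc.prems div_le_mono2[of "2 ^ n" "2 ^ Suc n" t] by simp
  then have "sqrt G ^ n * (sqrt G * \<alpha> (t div 2 ^ Suc n)) \<le> sqrt G ^ n * \<alpha> (t div 2 ^ n)"
    unfolding index using \<alpha>_half_index G_pos by (intro mult_left_mono) auto
  also have "\<dots> \<le> \<alpha> t"
    using Suc.IH \<open>1 \<le> t div 2 ^ n\<close> .
  finally show ?case
    by (simp add: mult_ac)
qed simp

lemma expectation_exp_L_le_exp_F: "\<eta> \<ge> 0 \<Longrightarrow> (\<integral>\<omega>. exp (\<eta> * L t \<omega>) \<partial>M) \<le> exp (\<eta> * F)"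
  using L_le_F by (intro M.integral_le_const integrable_exp_L) (auto intro: mult_left_mono)

lemma scaled_step_le_Qc:
  assumes "1 \<le> t div 2 ^ n" "t div 2 ^ n \<le> s"
  shows "Qc * G ^ n / \<alpha> t * \<alpha> s \<le> Qc"
proof -
  have "G ^ n * \<alpha> s \<le> sqrt G ^ n * \<alpha> (t div 2 ^ n)"
    using assms(2) \<alpha>_decseq power_le_sqrt_power[of G n] G_pos G_le_1 \<alpha>_pos[of s]
    by (intro mult_mono) (auto simp: decseq_def)
  also have "\<dots> \<le> \<alpha> t"
    using assms(1) by (rule \<alpha>_ge_sqrt_power)
  finally show ?thesis
    using Qc_pos \<alpha>_pos[of t] by (simp add: field_simps mult_left_mono)
qed

lemma Dc_divide_le_Hconst: "Dc / (1 - exp (- (\<kappa> * Qc * G ^ n))) \<le> Hconst N Y lam \<kappa> G n"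
  unfolding Hconst_def
  using divide_one_minus_exp_le_half[of "\<kappa> * Qc * G ^ n" Dc] \<kappa>_pos Qc_pos G_pos Dc_ge_1
  by (simp add: mult.assoc)

lemma expectation_exp_L_le:
  assumes n: "max (T0 \<alpha> \<kappa> B) 1 \<le> t div 2 ^ n"
  defines "\<eta> \<equiv> Qc * G ^ n / \<alpha> t"
  shows "(\<integral>\<omega>. exp (\<eta> * L (Suc t) \<omega>) \<partial>M)
    \<le> exp (- \<eta> * (- F - \<alpha> 0 * B + \<kappa> / 2 * (\<Sum>s\<in>{t div 2 ^ n..t}. \<alpha> s))) + Hconst N Y lam \<kappa> G n"
proof -
  define s0 where "s0 = t div 2 ^ n"
  define q where "q = exp (- (\<kappa> * Qc * G ^ n))"
  define m where "m s = (\<integral>\<omega>. exp (\<eta> * L s \<omega>) \<partial>M)" for s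
  define S where "S = (\<Sum>s\<in>{s0..t}. \<alpha> s)"
  have s0: "T0 \<alpha> \<kappa> B \<le> s0" "1 \<le> s0" "s0 \<le> t"
    using n unfolding s0_def by (auto intro: div_le_dividend)
  have \<eta>: "0 < \<eta>" "\<eta> * \<alpha> t = Qc * G ^ n"
    unfolding \<eta>_def using Qc_pos G_pos \<alpha>_pos[of t] by simp_all
  have admissible: "\<eta> * \<alpha> s \<le> Qc" if "s0 \<le> s" for s
    unfolding \<eta>_def using scaled_step_le_Qc s0(2) that by (simp add: s0_def)
  have rate: "exp (- (\<eta> * \<kappa> * \<alpha> s)) \<le> q" if "s \<le> t" for s
  proof -
    have "Qc * G ^ n \<le> \<eta> * \<alpha> s"
      unfolding \<eta>(2)[symmetric] using \<eta>(1) decseqD[OF \<alpha>_decseq that] by simp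
    then have "\<kappa> * Qc * G ^ n \<le> \<eta> * \<kappa> * \<alpha> s"
      using mult_left_mono[of _ _ \<kappa>] \<kappa>_pos by (fastforce simp: mult_ac)
    then show ?thesis
      unfolding q_def by simp
  qed
  have q: "q < 1"
    unfolding q_def using \<kappa>_pos Qc_pos G_pos by simp
  have "m (s0 + (Suc t - s0))
      \<le> exp (- (\<eta> * \<kappa> * (\<Sum>j\<in>{s0..<s0 + (Suc t - s0)}. \<alpha> j))) * m s0 + Dc / (1 - q)"
  proof (rule exp_linear_recursion_le)
    fix s
    assume "s0 \<le> s" "s < s0 + (Suc t - s0)"
    then show "m (Suc s) \<le> exp (- (\<eta> * \<kappa> * \<alpha> s)) * m s + Dc" "exp (- (\<eta> * \<kappa> * \<alpha> s)) \<le> q"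
      unfolding m_def using s0 by (auto intro!: expectation_exp_L_Suc_le \<eta>(1) admissible rate)
  qed (use q Dc_ge_1 in auto)
  then have "m (Suc t) \<le> exp (- (\<eta> * \<kappa> * S)) * m s0 + Dc / (1 - q)"
    using s0(3) by (simp add: S_def atLeastLessThanSuc_atLeastAtMost)
  moreover have "exp (- (\<eta> * \<kappa> * S)) * m s0 \<le> exp (- (\<eta> * \<kappa> * S)) * exp (\<eta> * F)"
    unfolding m_def using \<eta>(1) by (intro mult_left_mono expectation_exp_L_le_exp_F) auto
  ultimately have "m (Suc t) \<le> exp (- (\<eta> * \<kappa> * S)) * exp (\<eta> * F) + Dc / (1 - q)"
    by linarith
  also have "exp (- (\<eta> * \<kappa> * S)) * exp (\<eta> * F) \<le> exp (- \<eta> * (- F - \<alpha> 0 * B + \<kappa> / 2 * S))"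
    unfolding mult_exp_exp
    using \<eta> \<kappa>_pos \<alpha>_pos[of 0] B_pos sum_nonneg[of "{s0..t}" \<alpha>] less_imp_le[OF \<alpha>_pos]
    by (simp add: S_def algebra_simps mult_nonneg_nonneg)
  finally show ?thesis
    using Dc_divide_le_Hconst[of n] unfolding m_def S_def s0_def q_def by linarith
qed

lemma prob_L_Suc_ge_le:
  assumes n: "max (T0 \<alpha> \<kappa> B) 1 \<le> t div 2 ^ n"
  shows "measure M {\<omega>\<in>space M. z \<le> L (Suc t) \<omega>}
    \<le> exp (- (Qc * G ^ n / \<alpha> t) * (z - F - \<alpha> 0 * B + \<kappa> / 2 * (\<Sum>s\<in>{t div 2 ^ n..t}. \<alpha> s)))
      + Hconst N Y lam \<kappa> G n * exp (- (Qc * G ^ n / \<alpha> t) * z)"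
proof -
  define \<eta> where "\<eta> = Qc * G ^ n / \<alpha> t"
  have \<eta>: "\<eta> > 0"
    unfolding \<eta>_def using Qc_pos G_pos \<alpha>_pos[of t] by simp
  have "measure M {\<omega>\<in>space M. z \<le> L (Suc t) \<omega>} \<le> exp (- \<eta> * z) * (\<integral>\<omega>. exp (\<eta> * L (Suc t) \<omega>) \<partial>M)"
    using \<eta> by (intro M.prob_ge_le_exp_expectation integrable_exp_L) auto
  also have "\<dots> \<le> exp (- \<eta> * z) * (exp (- \<eta> * (- F - \<alpha> 0 * B + \<kappa> / 2 * (\<Sum>s\<in>{t div 2 ^ n..t}. \<alpha> s)))
      + Hconst N Y lam \<kappa> G n)"
    unfolding \<eta>_def by (intro mult_left_mono expectation_exp_L_le n) simp
  finally show ?thesis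
    unfolding \<eta>_def by (simp add: distrib_left mult_exp_exp algebra_simps)
qed

lemma expectation_L_Suc_le:
  assumes n: "max (T0 \<alpha> \<kappa> B) 1 \<le> t div 2 ^ n"
    and long: "F + \<alpha> 0 * B \<le> \<kappa> / 2 * (\<Sum>s\<in>{t div 2 ^ n..t}. \<alpha> s)"
  shows "(\<integral>\<omega>. L (Suc t) \<omega> \<partial>M) \<le> (1 + Hconst N Y lam \<kappa> G n) / (Qc * G ^ n) * \<alpha> t"
proof -
  define \<eta> where "\<eta> = Qc * G ^ n / \<alpha> t"
  have \<eta>: "\<eta> > 0"
    unfolding \<eta>_def using Qc_pos G_pos \<alpha>_pos[of t] by simp
  have "exp (- \<eta> * (- F - \<alpha> 0 * B + \<kappa> / 2 * (\<Sum>s\<in>{t div 2 ^ n..t}. \<alpha> s))) \<le> 1"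
    using \<eta> long by (simp add: mult_nonneg_nonneg)
  then have mgf: "(\<integral>\<omega>. exp (\<eta> * L (Suc t) \<omega>) \<partial>M) \<le> 1 + Hconst N Y lam \<kappa> G n"
    using expectation_exp_L_le[OF n] unfolding \<eta>_def by linarith
  have "(\<integral>\<omega>. L (Suc t) \<omega> \<partial>M) \<le> (\<integral>\<omega>. exp (\<eta> * L (Suc t) \<omega>) \<partial>M) / \<eta>"
    using \<eta> L_abs_le
    by (intro M.expectation_le_exp_expectation_divide integrable_exp_L integrable_bounded) auto
  also have "\<dots> \<le> (1 + Hconst N Y lam \<kappa> G n) / \<eta>"
    using mgf \<eta> by (rule divide_right_mono[OF _ less_imp_le])
  finally show ?thesis
    unfolding \<eta>_def using \<alpha>_pos[of t] by simp
qed

end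

lemma measurable_continuous_on_comp_closed:
  fixes f :: "'b::topological_space \<Rightarrow> 'c::real_normed_vector"
  assumes "closed X" "continuous_on X f" "g \<in> M \<rightarrow>\<^sub>M borel" "\<And>\<omega>. \<omega> \<in> space M \<Longrightarrow> g \<omega> \<in> X"
  shows "(\<lambda>\<omega>. f (g \<omega>)) \<in> borel_measurable M"
proof -
  have "(\<lambda>y. indicator X y *\<^sub>R f y) \<in> borel_measurable borel"
    using assms(1,2) by (intro borel_measurable_continuous_on_indicator) auto
  then have "(\<lambda>\<omega>. indicator X (g \<omega>) *\<^sub>R f (g \<omega>)) \<in> borel_measurable M"
    using assms(3) by measurable
  then show ?thesis
    by (rule measurable_cong[THEN iffD1, rotated]) (simp add: assms(4))
qed

lemma compact_image_diff_le_Sup_minus_Inf: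
  fixes f :: "'b::topological_space \<Rightarrow> real"
  assumes "compact X" "continuous_on X f" "x \<in> X" "y \<in> X"
  shows "f x - f y \<le> Sup (f ` X) - Inf (f ` X)"
proof -
  have "bounded (f ` X)"
    using assms(1,2) by (intro compact_imp_bounded compact_continuous_image)
  then have "f x \<le> Sup (f ` X)" "Inf (f ` X) \<le> f y"
    using assms(3,4) by (auto intro: cSup_upper cInf_lower bounded_imp_bdd_above bounded_imp_bdd_below)
  then show ?thesis
    by simp
qed

theorem proposition2:
  fixes X :: "'d::euclidean_space set" and f :: "'d \<Rightarrow> real" and xstar :: 'd
    and M :: "'a measure" and Fs :: "nat \<Rightarrow> 'a measure" and x :: "nat \<Rightarrow> 'a \<Rightarrow> 'd"
    and \<alpha> :: "nat \<Rightarrow> real" and \<kappa> B lam G :: real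
    and N :: "'b measure" and Y :: "'b \<Rightarrow> real"
  assumes X: "X \<noteq> {}" "closed X" "bounded X" "convex X"
    and f_cont: "continuous_on X f"
    and xstar: "xstar \<in> X" "\<forall>y\<in>X. f xstar \<le> f y"
    and M: "prob_space M"
    and filt: "filtration (space M) Fs" "\<forall>t. subalgebra M (Fs t)"
    and adapted: "\<forall>t. x t \<in> Fs t \<rightarrow>\<^sub>M borel" "\<forall>t. \<forall>\<omega>\<in>space M. x t \<omega> \<in> X"
    and A: "stepsize_A \<alpha>"
    and C1: "\<kappa> > 0" "B > 0"
      "\<forall>t. AE \<omega> in M. f (x t \<omega>) - f xstar \<ge> \<alpha> t * B \<longrightarrow>
           real_cond_exp M (Fs t) (\<lambda>\<omega>. f (x (Suc t) \<omega>) - f (x t \<omega>)) \<omega> \<le> - 2 * \<alpha> t * \<kappa>"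
    and C2: "lam > 0" "prob_space N" "Y \<in> borel_measurable N" "\<forall>\<omega>\<in>space N. Y \<omega> \<ge> 0"
      "integrable N (\<lambda>\<omega>. exp (lam * Y \<omega>))"
      "\<forall>t. \<forall>y\<ge>0. AE \<omega> in M.
           real_cond_exp M (Fs t)
             (indicator {\<omega>'\<in>space M. \<bar>f (x (Suc t) \<omega>') - f (x t \<omega>')\<bar> \<ge> \<alpha> t * y}) \<omega>
           \<le> measure N {\<omega>'\<in>space N. Y \<omega>' \<ge> y}"
    and G: "0 < G" "G \<le> 1" "\<forall>t\<ge>1. \<alpha> t \<ge> sqrt G * \<alpha> (t div 2)"
  defines "F \<equiv> Sup (f ` X) - Inf (f ` X)"
    and "L \<equiv> (\<lambda>t \<omega>. f (x t \<omega>) - f xstar - \<alpha> t * B)"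
  shows "\<forall>n::nat. \<forall>t::nat. t div 2 ^ n \<ge> max (T0 \<alpha> \<kappa> B) 1 \<longrightarrow>
           (\<forall>z\<ge>0. measure M {\<omega>\<in>space M. L (Suc t) \<omega> \<ge> z}
              \<le> exp (- (Qconst N Y lam \<kappa> * G ^ n / \<alpha> t) *
                     (z - F - \<alpha> 0 * B + \<kappa> / 2 * (\<Sum>s\<in>{t div 2 ^ n..t}. \<alpha> s)))
                + Hconst N Y lam \<kappa> G n * exp (- (Qconst N Y lam \<kappa> * G ^ n / \<alpha> t) * z))
           \<and> (\<kappa> / 2 * (\<Sum>s\<in>{t div 2 ^ n..t}. \<alpha> s) \<ge> F + \<alpha> 0 * B \<longrightarrow>
              integral\<^sup>L M (L (Suc t)) \<le> (1 + Hconst N Y lam \<kappa> G n) / (Qconst N Y lam \<kappa> * G ^ n) * \<alpha> t)"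
proof -
  interpret gap: descent_gap M Fs "\<lambda>t \<omega>. f (x t \<omega>)" "f xstar" F \<alpha> \<kappa> B lam G N Y
  proof (rule descent_gap.intro)
    show "(\<lambda>\<omega>. f (x t \<omega>)) \<in> borel_measurable (Fs t)" for t
    proof (rule measurable_continuous_on_comp_closed[OF X(2) f_cont])
      show "x t \<in> Fs t \<rightarrow>\<^sub>M borel"
        using adapted(1) by blast
      fix \<omega>
      assume "\<omega> \<in> space (Fs t)"
      then show "x t \<omega> \<in> X"
        using adapted(2) filt(2) by (simp add: subalgebra_def)
    qed
    show "f xstar \<le> f (x t \<omega>) \<and> f (x t \<omega>) \<le> f xstar + F" if "\<omega> \<in> space M" for t \<omega>
      using that xstar adapted(2) X f_cont compact_image_diff_le_Sup_minus_Inf[of X f "x t \<omega>" xstar]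
      unfolding F_def by (auto simp: compact_eq_bounded_closed)
  qed (use M filt(2) A[unfolded stepsize_A_def] C1 C2 G in simp_all)
  have L: "L = gap.L"
    by (simp add: fun_eq_iff L_def gap.L_def)
  show ?thesis
    unfolding L using gap.prob_L_Suc_ge_le gap.expectation_L_Suc_le by blast
qed

end
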